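(* Let $0<\epsilon\le0.01$, $\Delta\ge0$, and let $\mathbb{K}_1,\mathbb{K}_2$ be joint distributions of $(X,Y)\in\mathbb{R}^d\times(0,\infty)$ whose $X$-marginals have the same support $S$. Suppose that for all $x_i,x_j\in S$, the conditional distributions $\mathbb{D}_i=Y\mid(X=x_i)$ and $\mathbb{D}_j=Y\mid(X=x_j)$ (which may be taken under either $\mathbb{K}_1$ or $\mathbb{K}_2$) satisfy $\mathrm{EMD}(\mathbb{D}_i,\mathbb{D}_j)\le\Delta$. Then for every $\theta\in\mathbb{R}^+$, $$\mathbb{E}_{(x,y)\sim\mathbb{K}_1}[g(\theta+\epsilon,y)]\le(1+\epsilon)\left(1+\frac{\Delta}{\epsilon^2}\right)\mathbb{E}_{(x,y)\sim\mathbb{K}_2}[g(\theta,y)],$$ and $$\inf_{\theta}\mathbb{E}_{(x,y)\sim\mathbb{K}_1}[g(\theta,y)]\le(1+\epsilon)\left(1+\frac{\Delta}{\epsilon^2}\right)\inf_{\theta}\mathbb{E}_{(x,y)\sim\mathbb{K}_2}[g(\theta,y)],$$ where the infima are over constant thresholds $\theta\in\mathbb{R}^+$.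
   Context: For threshold $\theta\ge0$ and season length $y>0$: $g(\theta,y)=\frac{1+\theta}{\min\{1,y\}}$ if $y\ge\theta$ and $g(\theta,y)=\frac{y}{\min\{1,y\}}$ otherwise (the competitive ratio of the ski-rental strategy that rents, at cost $1$ per unit time, until time $\theta$ and then buys at cost $1$). Earth mover distance: for distributions $\mathbb{X},\mathbb{Y}$ on $\mathbb{R}$, $\mathrm{EMD}(\mathbb{X},\mathbb{Y})=\min\mathbb{E}_{(u,v)\sim\mathbb{J}}|u-v|$ over all couplings $\mathbb{J}$ with marginals $\mathbb{X},\mathbb{Y}$. *)

theory Defs
  imports "HOL-Probability.Probability"
begin

text \<open>Competitive ratio of the ski-rental strategy with threshold theta on season length y.\<close>
definition ski_g :: "real \<Rightarrow> real \<Rightarrow> real" where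
  "ski_g \<theta> y = (if y \<ge> \<theta> then (1 + \<theta>) / min 1 y else y / min 1 y)"

definition couplings :: "real measure \<Rightarrow> real measure \<Rightarrow> (real \<times> real) measure set" where
  "couplings D1 D2 = {J. prob_space J \<and> sets J = sets (borel :: (real \<times> real) measure)
      \<and> distr J borel fst = D1 \<and> distr J borel snd = D2}"

definition EMD :: "real measure \<Rightarrow> real measure \<Rightarrow> ennreal" where
  "EMD D1 D2 = (INF J \<in> couplings D1 D2. \<integral>\<^sup>+ z. ennreal \<bar>fst z - snd z\<bar> \<partial>J)"

definition support_of :: "'a::metric_space measure \<Rightarrow> 'a set" where
  "support_of \<mu> = {x. \<forall>e>0. emeasure \<mu> (ball x e) > 0}"

text \<open>kappa is (a version of) the conditional distribution of Y given X under the
  joint distribution K of (X,Y): a probability kernel such that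
  K(A x B) = integral over A of kappa x (B) w.r.t. the X-marginal.\<close>
definition cond_dist :: "('a::topological_space \<times> real) measure \<Rightarrow> ('a \<Rightarrow> real measure) \<Rightarrow> bool" where
  "cond_dist K \<kappa> \<longleftrightarrow> \<kappa> \<in> measurable borel (prob_algebra borel) \<and>
     (\<forall>A \<in> sets borel. \<forall>B \<in> sets borel.
        emeasure K (A \<times> B) = (\<integral>\<^sup>+ x \<in> A. emeasure (\<kappa> x) B \<partial>(distr K borel fst)))"

end

theory Submission
  imports Defs
begin

text \<open>For every season length v > 0 and every u,
  g(\<theta> + \<epsilon>, u) \<le> (1 + \<epsilon>) g(\<theta>, v) + (1 + \<epsilon>)/\<epsilon>^2 |u - v|:
  moving the threshold by \<epsilon> makes the ratio Lipschitz in the season length, up to the factor 1 + \<epsilon>.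
  Integrating this against a near-optimal coupling of the conditional distributions at x and x'
  gives E g(\<theta> + \<epsilon>) \<le> (1 + \<epsilon>) E' g(\<theta>) + (1 + \<epsilon>) \<Delta>/\<epsilon>^2, and since every ratio is at
  least 1 the additive error becomes the factor 1 + \<Delta>/\<epsilon>^2. The bound holds for all pairs of
  points of the common support, so it survives averaging over both X-marginals; the bound on
  the infima follows by giving K1 the threshold \<theta> + \<epsilon>.\<close>

lemma ski_g_ge_one: "0 \<le> \<theta> \<Longrightarrow> 0 < v \<Longrightarrow> 1 \<le> ski_g \<theta> v"
  unfolding ski_g_def by (auto simp: min_def field_simps)

lemma ski_g_le_one_of_nonpos: "0 < \<theta> \<Longrightarrow> u \<le> 0 \<Longrightarrow> ski_g \<theta> u \<le> 1"
  unfolding ski_g_def by (auto simp: min_def)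

lemma ski_g_below_threshold: "0 < u \<Longrightarrow> u < \<theta> \<Longrightarrow> ski_g \<theta> u = max 1 u"
  unfolding ski_g_def by (auto simp: min_def max_def)

lemma ski_g_above_threshold: "\<theta> \<le> u \<Longrightarrow> ski_g \<theta> u = (1 + \<theta>) / min 1 u"
  unfolding ski_g_def by simp

lemma inverse_le_inverse_min_one:
  fixes u v :: real
  assumes "0 < u" "0 < v"
  shows "1 / u \<le> 1 / min 1 v + \<bar>u - v\<bar> / u\<^sup>2"
proof (cases "u \<le> min 1 v")
  case True
  have "1 / u - 1 / min 1 v = (min 1 v - u) / (u * min 1 v)"
    using assms by (simp add: field_simps)
  also have "\<dots> \<le> (min 1 v - u) / u\<^sup>2"
    using True assms by (intro divide_left_mono) (auto simp: power2_eq_square)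
  also have "\<dots> \<le> \<bar>u - v\<bar> / u\<^sup>2"
    using assms by (intro divide_right_mono) auto
  finally show ?thesis by simp
next
  case False
  then have "1 / u \<le> 1 / min 1 v" using assms by (intro frac_le) auto
  then show ?thesis by (simp add: add_increasing2)
qed

lemma ski_g_shift_le:
  fixes \<epsilon> \<theta> u v :: real
  assumes \<epsilon>: "0 < \<epsilon>" "\<epsilon> \<le> 1/2" and \<theta>: "0 \<le> \<theta>" and v: "0 < v"
  shows "ski_g (\<theta> + \<epsilon>) u \<le> (1 + \<epsilon>) * ski_g \<theta> v + (1 + \<epsilon>) / \<epsilon>\<^sup>2 * \<bar>u - v\<bar>"
proof -
  define c where "c = (1 + \<epsilon>) / \<epsilon>\<^sup>2"
  have gv: "1 \<le> ski_g \<theta> v" using ski_g_ge_one \<theta> v .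
  have c_eps: "c * \<epsilon> = 1 + 1 / \<epsilon>" and inv_eps: "2 \<le> 1 / \<epsilon>"
    using \<epsilon> by (simp_all add: c_def power2_eq_square field_simps)
  have "\<epsilon> * \<epsilon> \<le> 1" using \<epsilon> by (intro mult_le_one) auto
  then have c_ge: "1 \<le> c" using \<epsilon> by (simp add: c_def power2_eq_square)
  have rhs_ge: "ski_g \<theta> v + c * \<bar>u - v\<bar> \<le> (1 + \<epsilon>) * ski_g \<theta> v + c * \<bar>u - v\<bar>"
    using \<epsilon> gv by (simp add: algebra_simps)
  have dist_le: "\<bar>u - v\<bar> \<le> c * \<bar>u - v\<bar>"
    using c_ge by (simp add: mult_le_cancel_right1)
  consider "u \<le> 0" | "0 < u" "u < \<theta> + \<epsilon>" | "\<theta> + \<epsilon> \<le> u" "v < \<theta>" | "\<theta> + \<epsilon> \<le> u" "\<theta> \<le> v"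
    by linarith
  then have "ski_g (\<theta> + \<epsilon>) u \<le> (1 + \<epsilon>) * ski_g \<theta> v + c * \<bar>u - v\<bar>"
  proof cases
    case 1
    then show ?thesis
      using ski_g_le_one_of_nonpos[of "\<theta> + \<epsilon>" u] \<epsilon> \<theta> gv rhs_ge dist_le by linarith
  next
    case 2
    have "ski_g (\<theta> + \<epsilon>) u \<le> ski_g \<theta> v + \<bar>u - v\<bar>"
    proof (cases "v < \<theta>")
      case True
      then show ?thesis using 2 v by (auto simp: ski_g_below_threshold max_def)
    next
      case False
      have "1 + \<theta> \<le> ski_g \<theta> v"
        using False v \<theta> by (simp add: ski_g_above_threshold le_divide_eq min_def)
      then show ?thesis using 2 \<epsilon> \<theta> by (auto simp: ski_g_below_threshold max_def)
    qed
    then show ?thesis using rhs_ge dist_le by linarith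
  next
    case 3
    have gap: "\<epsilon> \<le> u - v" using 3 by linarith
    have "ski_g (\<theta> + \<epsilon>) u \<le> max 1 v + c * (u - v)"
    proof (cases "1 \<le> u")
      case True
      have "(c - 1) * \<epsilon> \<le> (c - 1) * (u - v)" using gap c_ge by (intro mult_left_mono) auto
      moreover have "1 \<le> (c - 1) * \<epsilon>" using c_eps inv_eps \<epsilon> by (simp add: left_diff_distrib)
      ultimately show ?thesis using 3 True by (simp add: ski_g_above_threshold algebra_simps)
    next
      case False
      have u_pos: "0 < u" using 3 \<epsilon> \<theta> by linarith
      have "ski_g (\<theta> + \<epsilon>) u = (1 + \<theta> + \<epsilon>) / u"
        using 3 False by (simp add: ski_g_above_threshold)
      also have "\<dots> \<le> (1 + u) / u" using 3 u_pos by (intro divide_right_mono) auto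
      also have "\<dots> = 1 + 1 / u" using u_pos by (simp add: field_simps)
      also have "\<dots> \<le> 1 + 1 / \<epsilon>" using 3 \<epsilon> \<theta> by (simp add: frac_le)
      also have "\<dots> \<le> c * (u - v)"
        using mult_left_mono[OF gap, of c] c_ge c_eps by simp
      also have "\<dots> \<le> max 1 v + c * (u - v)" by (simp add: add_increasing)
      finally show ?thesis .
    qed
    moreover have "ski_g \<theta> v = max 1 v" using 3 v by (simp add: ski_g_below_threshold)
    moreover have "\<bar>u - v\<bar> = u - v" using gap \<epsilon> by simp
    ultimately show ?thesis using rhs_ge by linarith
  next
    case 4
    have gv_eq: "ski_g \<theta> v = (1 + \<theta>) / min 1 v"
      using 4 by (simp add: ski_g_above_threshold)
    have "ski_g (\<theta> + \<epsilon>) u \<le> (1 + \<epsilon>) * ((1 + \<theta>) / min 1 u)"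
      using 4 \<epsilon> \<theta> by (simp add: ski_g_above_threshold divide_right_mono algebra_simps)
    also have "\<dots> \<le> (1 + \<epsilon>) * ski_g \<theta> v + c * \<bar>u - v\<bar>"
    proof (cases "1 \<le> u")
      case True
      have "1 + \<theta> \<le> (1 + \<theta>) / min 1 v" using v \<theta> by (simp add: le_divide_eq min_def)
      then have "(1 + \<epsilon>) * (1 + \<theta>) \<le> (1 + \<epsilon>) * ski_g \<theta> v"
        using \<epsilon> gv_eq by (intro mult_left_mono) auto
      moreover have "0 \<le> c * \<bar>u - v\<bar>" using c_ge by simp
      ultimately show ?thesis using True by simp
    next
      case False
      have u_pos: "0 < u" using 4 \<epsilon> \<theta> by linarith
      have "\<epsilon> * \<epsilon> \<le> 2 * \<epsilon>" using \<epsilon> by (intro mult_right_mono) auto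
      then have "\<epsilon> * \<epsilon> * \<theta> \<le> 2 * \<epsilon> * \<theta>" using \<theta> by (rule mult_right_mono)
      then have "(1 + \<theta>) * \<epsilon>\<^sup>2 \<le> (\<theta> + \<epsilon>)\<^sup>2"
        by (simp add: power2_eq_square algebra_simps add_increasing)
      also have "\<dots> \<le> u\<^sup>2" using 4 \<epsilon> \<theta> by (intro power_mono) auto
      finally have "(1 + \<theta>) / u\<^sup>2 \<le> 1 / \<epsilon>\<^sup>2"
        using \<epsilon> u_pos by (simp add: field_simps)
      then have "(1 + \<theta>) / u\<^sup>2 * \<bar>u - v\<bar> \<le> 1 / \<epsilon>\<^sup>2 * \<bar>u - v\<bar>"
        by (rule mult_right_mono) simp
      then have "(1 + \<theta>) * (\<bar>u - v\<bar> / u\<^sup>2) \<le> \<bar>u - v\<bar> / \<epsilon>\<^sup>2" by simp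
      moreover have "(1 + \<theta>) * (1 / u) \<le> (1 + \<theta>) * (1 / min 1 v + \<bar>u - v\<bar> / u\<^sup>2)"
        using inverse_le_inverse_min_one[OF u_pos v] \<theta> by (intro mult_left_mono) auto
      ultimately have "(1 + \<theta>) / u \<le> ski_g \<theta> v + \<bar>u - v\<bar> / \<epsilon>\<^sup>2"
        unfolding gv_eq by (simp add: distrib_left)
      then have "(1 + \<epsilon>) * ((1 + \<theta>) / u) \<le> (1 + \<epsilon>) * (ski_g \<theta> v + \<bar>u - v\<bar> / \<epsilon>\<^sup>2)"
        using \<epsilon> by (intro mult_left_mono) auto
      then show ?thesis using False by (simp add: c_def field_simps)
    qed
    finally show ?thesis .
  qed
  then show ?thesis unfolding c_def .
qed

lemma borel_measurable_ski_g [measurable]: "ski_g \<theta> \<in> borel_measurable borel"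
  unfolding ski_g_def by measurable

lemma nn_integral_ski_g_ge_one:
  assumes "prob_space D" "0 \<le> \<theta>" "AE y in D. 0 < y"
  shows "1 \<le> (\<integral>\<^sup>+y. ennreal (ski_g \<theta> y) \<partial>D)"
proof -
  have "(\<integral>\<^sup>+y. 1 \<partial>D) \<le> (\<integral>\<^sup>+y. ennreal (ski_g \<theta> y) \<partial>D)"
    using assms(3) by (intro nn_integral_mono_AE) (auto elim!: eventually_mono intro: ski_g_ge_one[OF assms(2)])
  then show ?thesis using prob_space.emeasure_space_1[OF assms(1)] by simp
qed

lemma
  fixes M :: "('a::second_countable_topology \<times> 'b::second_countable_topology) measure"
  assumes "sets M = sets borel"
  shows measurable_fst_borel: "fst \<in> borel_measurable M"
    and measurable_snd_borel: "snd \<in> borel_measurable M"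
  by (simp_all add: measurable_cong_sets[OF assms refl] borel_prod[symmetric])

lemma nn_integral_le_coupling:
  fixes f h :: "real \<Rightarrow> ennreal" and a :: ennreal
  assumes J: "J \<in> couplings D D'" and c: "0 \<le> c"
    and f: "f \<in> borel_measurable borel" and h: "h \<in> borel_measurable borel"
    and P: "AE v in D'. P v"
    and bound: "\<And>u v. P v \<Longrightarrow> f u \<le> a * h v + ennreal (c * \<bar>u - v\<bar>)"
  shows "(\<integral>\<^sup>+u. f u \<partial>D) \<le> a * (\<integral>\<^sup>+v. h v \<partial>D') + ennreal c * (\<integral>\<^sup>+z. ennreal \<bar>fst z - snd z\<bar> \<partial>J)"
proof -
  have J_sets: "sets J = sets borel" and D: "D = distr J borel fst" and D': "D' = distr J borel snd"
    using J unfolding couplings_def by auto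
  note [measurable] = measurable_fst_borel[OF J_sets] measurable_snd_borel[OF J_sets]
  have "AE z in J. P (snd z)" using P unfolding D' by (rule AE_distrD[rotated]) measurable
  then have "(\<integral>\<^sup>+u. f u \<partial>D) \<le> (\<integral>\<^sup>+z. a * h (snd z) + ennreal c * ennreal \<bar>fst z - snd z\<bar> \<partial>J)"
    unfolding D using bound c f
    by (subst nn_integral_distr) (auto intro!: nn_integral_mono_AE elim!: eventually_mono simp: ennreal_mult)
  also have "\<dots> = a * (\<integral>\<^sup>+v. h v \<partial>D') + ennreal c * (\<integral>\<^sup>+z. ennreal \<bar>fst z - snd z\<bar> \<partial>J)"
  proof -
    have h_snd: "(\<lambda>z. h (snd z)) \<in> borel_measurable J" using h by measurable
    have dist: "(\<lambda>z. ennreal \<bar>fst z - snd z\<bar>) \<in> borel_measurable J" by measurable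
    have "(\<integral>\<^sup>+v. h v \<partial>D') = (\<integral>\<^sup>+z. h (snd z) \<partial>J)"
      unfolding D' by (rule nn_integral_distr[OF measurable_snd_borel[OF J_sets]]) (use h in simp)
    then show ?thesis using h_snd dist by (simp add: nn_integral_add nn_integral_cmult)
  qed
  finally show ?thesis .
qed

lemma nn_integral_le_EMD:
  fixes f h :: "real \<Rightarrow> ennreal" and a :: ennreal and c \<Delta> :: real
  assumes c: "0 < c" and \<Delta>: "0 \<le> \<Delta>" and emd: "EMD D D' \<le> ennreal \<Delta>"
    and f: "f \<in> borel_measurable borel" and h: "h \<in> borel_measurable borel"
    and P: "AE v in D'. P v"
    and bound: "\<And>u v. P v \<Longrightarrow> f u \<le> a * h v + ennreal (c * \<bar>u - v\<bar>)"
  shows "(\<integral>\<^sup>+u. f u \<partial>D) \<le> a * (\<integral>\<^sup>+v. h v \<partial>D') + ennreal (c * \<Delta>)"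
proof (rule ennreal_le_epsilon)
  fix e :: real assume e: "0 < e"
  have "0 < e / c" using c e by simp
  then have "ennreal \<Delta> < ennreal (\<Delta> + e / c)" using \<Delta> by (intro ennreal_lessI) auto
  then have "EMD D D' < ennreal (\<Delta> + e / c)" by (rule le_less_trans[OF emd])
  then obtain J where J: "J \<in> couplings D D'"
    and cost: "(\<integral>\<^sup>+z. ennreal \<bar>fst z - snd z\<bar> \<partial>J) < ennreal (\<Delta> + e / c)"
    unfolding EMD_def INF_less_iff by blast
  have "(\<integral>\<^sup>+u. f u \<partial>D) \<le> a * (\<integral>\<^sup>+v. h v \<partial>D') + ennreal c * (\<integral>\<^sup>+z. ennreal \<bar>fst z - snd z\<bar> \<partial>J)"
    using c by (intro nn_integral_le_coupling[OF J _ f h P bound]) auto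
  also have "\<dots> \<le> a * (\<integral>\<^sup>+v. h v \<partial>D') + ennreal c * ennreal (\<Delta> + e / c)"
    using cost by (intro add_left_mono mult_left_mono) auto
  also have "ennreal c * ennreal (\<Delta> + e / c) = ennreal (c * (\<Delta> + e / c))"
    by (rule ennreal_mult[symmetric]) (use c \<Delta> \<open>0 < e / c\<close> in auto)
  also have "c * (\<Delta> + e / c) = c * \<Delta> + e" using c by (simp add: field_simps)
  also have "ennreal (c * \<Delta> + e) = ennreal (c * \<Delta>) + ennreal e"
    by (rule ennreal_plus) (use c \<Delta> e in auto)
  finally show "(\<integral>\<^sup>+u. f u \<partial>D) \<le> a * (\<integral>\<^sup>+v. h v \<partial>D') + ennreal (c * \<Delta>) + ennreal e"
    by (simp add: add.assoc)
qed

lemma nn_integral_ski_g_shift_le_EMD: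
  fixes D D' :: "real measure"
  assumes \<epsilon>: "0 < \<epsilon>" "\<epsilon> \<le> 1/2" and \<theta>: "0 \<le> \<theta>" and \<Delta>: "0 \<le> \<Delta>"
    and D': "prob_space D'" "AE v in D'. 0 < v" and emd: "EMD D D' \<le> ennreal \<Delta>"
  shows "(\<integral>\<^sup>+u. ennreal (ski_g (\<theta> + \<epsilon>) u) \<partial>D)
    \<le> ennreal ((1 + \<epsilon>) * (1 + \<Delta> / \<epsilon>\<^sup>2)) * (\<integral>\<^sup>+v. ennreal (ski_g \<theta> v) \<partial>D')"
proof -
  define c where "c = (1 + \<epsilon>) / \<epsilon>\<^sup>2"
  define I where "I = (\<integral>\<^sup>+v. ennreal (ski_g \<theta> v) \<partial>D')"
  have c: "0 < c" using \<epsilon> by (simp add: c_def)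
  have bound: "ennreal (ski_g (\<theta> + \<epsilon>) u) \<le> ennreal (1 + \<epsilon>) * ennreal (ski_g \<theta> v) + ennreal (c * \<bar>u - v\<bar>)"
    if v: "0 < v" for u v
  proof -
    have "0 \<le> ski_g \<theta> v" using ski_g_ge_one[OF \<theta> v] by simp
    then have "ennreal (1 + \<epsilon>) * ennreal (ski_g \<theta> v) + ennreal (c * \<bar>u - v\<bar>)
        = ennreal ((1 + \<epsilon>) * ski_g \<theta> v + c * \<bar>u - v\<bar>)"
      using \<epsilon> c by (simp add: ennreal_mult)
    then show ?thesis using ski_g_shift_le[OF \<epsilon> \<theta> v, of u] by (simp add: c_def ennreal_leI)
  qed
  have "(\<integral>\<^sup>+u. ennreal (ski_g (\<theta> + \<epsilon>) u) \<partial>D) \<le> ennreal (1 + \<epsilon>) * I + ennreal (c * \<Delta>)"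
    unfolding I_def using bound by (intro nn_integral_le_EMD[OF c \<Delta> emd _ _ D'(2)]) auto
  also have "\<dots> \<le> ennreal (1 + \<epsilon>) * I + ennreal (c * \<Delta>) * I"
    using nn_integral_ski_g_ge_one[OF D'(1) \<theta> D'(2)] unfolding I_def
    by (intro add_left_mono) (metis mult.right_neutral mult_left_mono zero_le)
  also have "\<dots> = ennreal ((1 + \<epsilon>) + c * \<Delta>) * I"
    using \<epsilon> c \<Delta> by (simp add: distrib_right)
  also have "(1 + \<epsilon>) + c * \<Delta> = (1 + \<epsilon>) * (1 + \<Delta> / \<epsilon>\<^sup>2)"
    by (simp add: c_def field_simps)
  finally show ?thesis unfolding I_def .
qed

lemma nn_integral_le_cmult_of_pairwise_le:
  fixes f :: "'a \<Rightarrow> ennreal" and g :: "'b \<Rightarrow> ennreal"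
  assumes M: "prob_space M" and N: "prob_space N"
    and P: "AE x in M. P x" and Q: "AE y in N. Q y" and g: "g \<in> borel_measurable N"
    and le: "\<And>x y. P x \<Longrightarrow> Q y \<Longrightarrow> f x \<le> C * g y"
  shows "(\<integral>\<^sup>+x. f x \<partial>M) \<le> C * (\<integral>\<^sup>+y. g y \<partial>N)"
proof -
  have "(\<integral>\<^sup>+x. f x \<partial>M) \<le> C * g y" if "Q y" for y
  proof -
    have "(\<integral>\<^sup>+x. f x \<partial>M) \<le> (\<integral>\<^sup>+x. C * g y \<partial>M)"
      using P by (intro nn_integral_mono_AE) (auto elim!: eventually_mono intro: le that)
    then show ?thesis using prob_space.emeasure_space_1[OF M] by simp
  qed
  then have "(\<integral>\<^sup>+y. (\<integral>\<^sup>+x. f x \<partial>M) \<partial>N) \<le> (\<integral>\<^sup>+y. C * g y \<partial>N)"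
    using Q by (intro nn_integral_mono_AE) (auto elim!: eventually_mono)
  then show ?thesis using prob_space.emeasure_space_1[OF N] by (simp add: nn_integral_cmult[OF g])
qed

lemma INF_le_cmult_INF_ennreal:
  fixes F G :: "'a \<Rightarrow> ennreal" and C :: real
  assumes C: "0 < C" and witness: "\<And>\<theta>. \<theta> \<in> B \<Longrightarrow> \<exists>\<theta>'\<in>A. F \<theta>' \<le> ennreal C * G \<theta>"
  shows "(INF \<theta>\<in>A. F \<theta>) \<le> ennreal C * (INF \<theta>\<in>B. G \<theta>)"
proof -
  have cancel: "ennreal (1 / C) * (ennreal C * x) = x" for x
    using C by (simp add: mult.assoc[symmetric] ennreal_mult[symmetric])
  have "ennreal (1 / C) * (INF \<theta>\<in>A. F \<theta>) \<le> (INF \<theta>\<in>B. G \<theta>)"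
  proof (rule INF_greatest)
    fix \<theta> assume "\<theta> \<in> B"
    then obtain \<theta>' where "\<theta>' \<in> A" "F \<theta>' \<le> ennreal C * G \<theta>" using witness by blast
    then have "(INF \<theta>\<in>A. F \<theta>) \<le> ennreal C * G \<theta>" by (meson INF_lower order_trans)
    from mult_left_mono[OF this zero_le, of "ennreal (1 / C)"]
    show "ennreal (1 / C) * (INF \<theta>\<in>A. F \<theta>) \<le> G \<theta>" by (simp only: cancel)
  qed
  then have "ennreal C * (ennreal (1 / C) * (INF \<theta>\<in>A. F \<theta>)) \<le> ennreal C * (INF \<theta>\<in>B. G \<theta>)"
    by (rule mult_left_mono) simp
  moreover have "ennreal C * (ennreal (1 / C) * x) = x" for x
    using C by (simp add: mult.assoc[symmetric] ennreal_mult[symmetric])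
  ultimately show ?thesis by simp
qed

lemma AE_support_of:
  fixes \<mu> :: "'a::{metric_space, second_countable_topology} measure"
  assumes "sets \<mu> = sets borel"
  shows "AE x in \<mu>. x \<in> support_of \<mu>"
proof -
  define \<F> where "\<F> = {ball x e | x e. 0 < e \<and> emeasure \<mu> (ball x e) = 0}"
  obtain \<F>' where \<F>': "\<F>' \<subseteq> \<F>" "countable \<F>'" "\<Union>\<F>' = \<Union>\<F>"
    by (rule Lindelof[of \<F>]) (auto simp: \<F>_def)
  have "\<Union>\<F>' \<in> null_sets \<mu>"
  proof (rule null_sets_UN'[OF \<F>'(2), of "\<lambda>S. S", simplified])
    fix S assume "S \<in> \<F>'"
    then obtain x e where "S = ball x e" "emeasure \<mu> (ball x e) = 0"
      using \<F>'(1) by (auto simp: \<F>_def)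
    then show "S \<in> null_sets \<mu>" using assms by (simp add: null_sets_def)
  qed
  moreover have "{x \<in> space \<mu>. x \<notin> support_of \<mu>} \<subseteq> \<Union>\<F>'"
    unfolding \<F>'(3) by (force simp: support_of_def \<F>_def not_less)
  ultimately show ?thesis by (rule AE_I')
qed

lemma measurable_cond_dist:
  assumes "cond_dist K \<kappa>"
  shows "\<kappa> \<in> measurable (distr K borel fst) (subprob_algebra borel)"
proof -
  have "\<kappa> \<in> measurable borel (prob_algebra borel)" using assms unfolding cond_dist_def by auto
  then show ?thesis by (simp add: measurable_prob_algebraD cong: measurable_cong_sets)
qed

lemma cond_dist_prob_space:
  assumes "cond_dist K \<kappa>"
  shows "prob_space (\<kappa> x)"
  using assms measurable_space[of \<kappa> borel "prob_algebra borel" x]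
  by (auto simp: cond_dist_def space_prob_algebra)

lemma distr_snd_eq_bind_cond_dist:
  fixes K :: "('a::second_countable_topology \<times> real) measure"
  assumes K: "sets K = sets borel" and cond: "cond_dist K \<kappa>"
  shows "distr K borel snd = distr K borel fst \<bind> \<kappa>"
proof (rule measure_eqI)
  have ne: "space (distr K borel fst) \<noteq> {}" by simp
  note \<kappa> = measurable_cond_dist[OF cond]
  show "sets (distr K borel snd) = sets (distr K borel fst \<bind> \<kappa>)"
    using sets_bind_measurable[OF \<kappa> ne] by simp
  fix B assume "B \<in> sets (distr K borel snd)"
  then have B: "B \<in> sets borel" by simp
  have "snd -` B \<inter> space K = UNIV \<times> B" using sets_eq_imp_space_eq[OF K] by auto
  then have "emeasure (distr K borel snd) B = emeasure K (UNIV \<times> B)"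
    using emeasure_distr[OF measurable_snd_borel[OF K] B] by simp
  also have "\<dots> = (\<integral>\<^sup>+x. emeasure (\<kappa> x) B \<partial>distr K borel fst)"
    using cond B unfolding cond_dist_def by auto
  also have "\<dots> = emeasure (distr K borel fst \<bind> \<kappa>) B"
    using emeasure_bind[OF ne \<kappa> B] by simp
  finally show "emeasure (distr K borel snd) B = emeasure (distr K borel fst \<bind> \<kappa>) B" .
qed

lemma nn_integral_snd_cond_dist:
  fixes K :: "('a::second_countable_topology \<times> real) measure"
  assumes K: "sets K = sets borel" and cond: "cond_dist K \<kappa>" and f: "f \<in> borel_measurable borel"
  shows "(\<integral>\<^sup>+z. f (snd z) \<partial>K) = (\<integral>\<^sup>+x. \<integral>\<^sup>+y. f y \<partial>\<kappa> x \<partial>distr K borel fst)"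
proof -
  have "(\<integral>\<^sup>+z. f (snd z) \<partial>K) = (\<integral>\<^sup>+y. f y \<partial>distr K borel snd)"
    by (rule nn_integral_distr[OF measurable_snd_borel[OF K], symmetric]) (use f in simp)
  also have "\<dots> = (\<integral>\<^sup>+x. \<integral>\<^sup>+y. f y \<partial>\<kappa> x \<partial>distr K borel fst)"
    unfolding distr_snd_eq_bind_cond_dist[OF K cond]
    by (rule nn_integral_bind[OF f measurable_cond_dist[OF cond]])
  finally show ?thesis .
qed

lemma AE_cond_dist:
  fixes K :: "('a::second_countable_topology \<times> real) measure"
  assumes K: "sets K = sets borel" and cond: "cond_dist K \<kappa>"
    and P: "Measurable.pred borel P" and AE: "AE z in K. P (snd z)"
  shows "AE x in distr K borel fst. AE y in \<kappa> x. P y"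
proof -
  have "AE y in distr K borel snd. P y"
    using AE P by (subst AE_distr_iff[OF measurable_snd_borel[OF K]]) auto
  then show ?thesis
    unfolding distr_snd_eq_bind_cond_dist[OF K cond] AE_bind[OF measurable_cond_dist[OF cond] P] .
qed

lemma nn_integral_ski_g_shift_le_cond_dist:
  fixes K1 K2 :: "('a::{metric_space, second_countable_topology} \<times> real) measure"
  assumes \<epsilon>: "0 < \<epsilon>" "\<epsilon> \<le> 1/2" and \<theta>: "0 \<le> \<theta>" and \<Delta>: "0 \<le> \<Delta>"
    and K1: "prob_space K1" "sets K1 = sets borel"
    and K2: "prob_space K2" "sets K2 = sets borel" "AE z in K2. 0 < snd z"
    and cond1: "cond_dist K1 \<kappa>1" and cond2: "cond_dist K2 \<kappa>2"
    and supp: "support_of (distr K1 borel fst) = S" "support_of (distr K2 borel fst) = S"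
    and emd: "\<And>x x'. x \<in> S \<Longrightarrow> x' \<in> S \<Longrightarrow> EMD (\<kappa>1 x) (\<kappa>2 x') \<le> ennreal \<Delta>"
  shows "(\<integral>\<^sup>+z. ennreal (ski_g (\<theta> + \<epsilon>) (snd z)) \<partial>K1)
    \<le> ennreal ((1 + \<epsilon>) * (1 + \<Delta> / \<epsilon>\<^sup>2)) * (\<integral>\<^sup>+z. ennreal (ski_g \<theta> (snd z)) \<partial>K2)"
proof -
  note [measurable] = measurable_cond_dist[OF cond2]
  have "(\<integral>\<^sup>+z. ennreal (ski_g (\<theta> + \<epsilon>) (snd z)) \<partial>K1)
      = (\<integral>\<^sup>+x. \<integral>\<^sup>+y. ennreal (ski_g (\<theta> + \<epsilon>) y) \<partial>\<kappa>1 x \<partial>distr K1 borel fst)"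
    by (rule nn_integral_snd_cond_dist[OF K1(2) cond1]) measurable
  also have "\<dots> \<le> ennreal ((1 + \<epsilon>) * (1 + \<Delta> / \<epsilon>\<^sup>2))
      * (\<integral>\<^sup>+x'. \<integral>\<^sup>+y. ennreal (ski_g \<theta> y) \<partial>\<kappa>2 x' \<partial>distr K2 borel fst)"
  proof (rule nn_integral_le_cmult_of_pairwise_le)
    show "prob_space (distr K1 borel fst)" "prob_space (distr K2 borel fst)"
      using K1 K2 by (auto intro!: prob_space.prob_space_distr measurable_fst_borel)
    show "AE x in distr K1 borel fst. x \<in> S"
      using AE_support_of[of "distr K1 borel fst"] supp(1) by simp
    show "AE x' in distr K2 borel fst. x' \<in> S \<and> (AE y in \<kappa>2 x'. 0 < y)"
      using AE_support_of[of "distr K2 borel fst"] supp(2) AE_cond_dist[OF K2(2) cond2 _ K2(3)]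
      by auto
    show "(\<lambda>x'. \<integral>\<^sup>+y. ennreal (ski_g \<theta> y) \<partial>\<kappa>2 x') \<in> borel_measurable (distr K2 borel fst)"
      by measurable
    fix x x' assume "x \<in> S" "x' \<in> S \<and> (AE y in \<kappa>2 x'. 0 < y)"
    then show "(\<integral>\<^sup>+y. ennreal (ski_g (\<theta> + \<epsilon>) y) \<partial>\<kappa>1 x)
        \<le> ennreal ((1 + \<epsilon>) * (1 + \<Delta> / \<epsilon>\<^sup>2)) * (\<integral>\<^sup>+y. ennreal (ski_g \<theta> y) \<partial>\<kappa>2 x')"
      using nn_integral_ski_g_shift_le_EMD[OF \<epsilon> \<theta> \<Delta> cond_dist_prob_space[OF cond2]] emd by blast
  qed
  also have "(\<integral>\<^sup>+x'. \<integral>\<^sup>+y. ennreal (ski_g \<theta> y) \<partial>\<kappa>2 x' \<partial>distr K2 borel fst)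
      = (\<integral>\<^sup>+z. ennreal (ski_g \<theta> (snd z)) \<partial>K2)"
    by (rule nn_integral_snd_cond_dist[OF K2(2) cond2, symmetric]) measurable
  finally show ?thesis .
qed

theorem mainTheorem7:
  fixes K1 K2 :: "((real ^ 'd::finite) \<times> real) measure"
    and \<kappa>1 \<kappa>2 :: "real ^ 'd \<Rightarrow> real measure"
    and S :: "(real ^ 'd) set"
    and \<epsilon> \<Delta> :: real
  assumes eps: "0 < \<epsilon>" "\<epsilon> \<le> 0.01"
    and Delta: "\<Delta> \<ge> 0"
    and K1: "prob_space K1" "sets K1 = sets borel" "AE z in K1. snd z > 0"
    and K2: "prob_space K2" "sets K2 = sets borel" "AE z in K2. snd z > 0"
    and cond1: "cond_dist K1 \<kappa>1"
    and cond2: "cond_dist K2 \<kappa>2"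
    and supp: "support_of (distr K1 borel fst) = S" "support_of (distr K2 borel fst) = S"
    and emd: "\<And>xi xj D D'. xi \<in> S \<Longrightarrow> xj \<in> S \<Longrightarrow>
               D \<in> {\<kappa>1 xi, \<kappa>2 xi} \<Longrightarrow> D' \<in> {\<kappa>1 xj, \<kappa>2 xj} \<Longrightarrow>
               EMD D D' \<le> ennreal \<Delta>"
  shows "(\<forall>\<theta>\<ge>0. (\<integral>\<^sup>+ z. ennreal (ski_g (\<theta> + \<epsilon>) (snd z)) \<partial>K1)
            \<le> ennreal ((1 + \<epsilon>) * (1 + \<Delta> / \<epsilon>\<^sup>2)) * (\<integral>\<^sup>+ z. ennreal (ski_g \<theta> (snd z)) \<partial>K2)) \<and>
         ((INF \<theta>\<in>{0..}. \<integral>\<^sup>+ z. ennreal (ski_g \<theta> (snd z)) \<partial>K1)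
            \<le> ennreal ((1 + \<epsilon>) * (1 + \<Delta> / \<epsilon>\<^sup>2)) * (INF \<theta>\<in>{0..}. \<integral>\<^sup>+ z. ennreal (ski_g \<theta> (snd z)) \<partial>K2))"
proof -
  have "\<epsilon> \<le> 1/2" using eps by simp
  moreover have "EMD (\<kappa>1 x) (\<kappa>2 x') \<le> ennreal \<Delta>" if "x \<in> S" "x' \<in> S" for x x'
    using emd that by blast
  ultimately have shift: "\<forall>\<theta>\<ge>0. (\<integral>\<^sup>+ z. ennreal (ski_g (\<theta> + \<epsilon>) (snd z)) \<partial>K1)
      \<le> ennreal ((1 + \<epsilon>) * (1 + \<Delta> / \<epsilon>\<^sup>2)) * (\<integral>\<^sup>+ z. ennreal (ski_g \<theta> (snd z)) \<partial>K2)"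
    using nn_integral_ski_g_shift_le_cond_dist[OF eps(1) _ _ Delta K1(1,2) K2 cond1 cond2 supp] by blast
  have "0 < (1 + \<epsilon>) * (1 + \<Delta> / \<epsilon>\<^sup>2)" using eps Delta by (simp add: add_pos_nonneg)
  then have "(INF \<theta>\<in>{0..}. \<integral>\<^sup>+ z. ennreal (ski_g \<theta> (snd z)) \<partial>K1)
      \<le> ennreal ((1 + \<epsilon>) * (1 + \<Delta> / \<epsilon>\<^sup>2)) * (INF \<theta>\<in>{0..}. \<integral>\<^sup>+ z. ennreal (ski_g \<theta> (snd z)) \<partial>K2)"
    by (rule INF_le_cmult_INF_ennreal) (use shift eps in \<open>auto intro!: bexI[of _ "_ + \<epsilon>"]\<close>)
  with shift show ?thesis by blast
qed

end
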